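(* Let $n\ge2$, $d=n-1$, $\boldsymbol\nu\in\mathbb C^d$, $\boldsymbol m\in\mathbb Z^{d+1}$, and suppose there is $a\in[-\frac12,0]$ with $-\frac14-\frac a2<\operatorname{Re}\nu_l<-\frac a2$ for all $l=1,\dots,d$. Then for every $x>0$ and $u\in\mathbb C$ with $|u|=1$, the series of integrals $$J_{\boldsymbol\nu,\boldsymbol m}(x,u)=\frac{2^{d-1}}\pi\sum_{m\in\mathbb Z}u^m\int_{\mathbb R_+^d}j_{(0,m_{d+1}+m)}(xy_1\cdots y_d)\prod_{l=1}^dy_l^{2\nu_l-1}j_{(0,m_l+m)}(xy_l^{-1})\,dy_d\cdots dy_1$$ is absolutely convergent, i.e. $\sum_{m\in\mathbb Z}\int_{\mathbb R_+^d}\big|j_{(0,m_{d+1}+m)}(xy_1\cdots y_d)\prod_ly_l^{2\nu_l-1}j_{(0,m_l+m)}(xy_l^{-1})\big|\,d\boldsymbol y<\infty$.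
   Context: For $m\in\mathbb Z$ and $x>0$, $j_{(0,m)}(x)=2\pi i^mJ_m(4\pi x)$, with $J_m$ the classical $J$-Bessel function. *)

theory Defs
  imports "HOL-Analysis.Analysis"
begin

definition besselJ_nat :: "nat \<Rightarrow> real \<Rightarrow> real" where
  "besselJ_nat n z = (\<Sum>k. (-1) ^ k / (fact k * fact (k + n)) * (z / 2) ^ (2 * k + n))"

definition besselJ :: "int \<Rightarrow> real \<Rightarrow> real" where
  "besselJ m z = (if 0 \<le> m then besselJ_nat (nat m) z
                  else (-1) ^ nat (- m) * besselJ_nat (nat (- m)) z)"

definition jfun :: "int \<Rightarrow> real \<Rightarrow> complex" where
  "jfun m x = 2 * complex_of_real pi * (\<i> powi m) * complex_of_real (besselJ m (4 * pi * x))"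

definition Jintegrand ::
  "nat \<Rightarrow> (nat \<Rightarrow> complex) \<Rightarrow> (nat \<Rightarrow> int) \<Rightarrow> real \<Rightarrow> int \<Rightarrow> (nat \<Rightarrow> real) \<Rightarrow> complex" where
  "Jintegrand d \<nu> mm x m y =
     jfun (mm (d + 1) + m) (x * (\<Prod>l\<in>{1..d}. y l)) *
     (\<Prod>l\<in>{1..d}. complex_of_real (y l) powr (2 * \<nu> l - 1) * jfun (mm l + m) (x / y l))"

end

(* With X = 4 pi x and Y = y_1 ... y_d, the m-th integrand is a product of the Bessel values
   J_(m_(d+1)+m)(X Y) and J_(m_l+m)(X / y_l). Two estimates for J_k carry the proof. The power
   series gives |J_k(t)| <= (X/2)^k / k! * exp (X^2/4) for 0 <= t <= X, which decays faster
   than any geometric sequence in k. The monotonicity of an energy of w(t) = sqrt t * J_k(t),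
   a solution of w'' + (1 - (k^2 - 1/4) / t^2) w = 0, gives |J_k(t)| <= 4 e^2 e^(3k) and
   sqrt t * |J_k(t)| <= 4 e^2 e^(3k) for all t >= 0.
   Where Y <= 1 the first factor has argument at most X, and where y_r >= 1 so does the factor
   J_(m_r+m)(X / y_r). Using the first estimate for that factor and the second for all others
   dominates the integrand by a finite sum of products of the one-variable functions
   t^(e-1) min 1 (sqrt (t/X)) and t^(e-1) [t >= 1], e = 2 Re nu_l + a in (-1/2, 0), which are
   integrable on (0, oo), with coefficients summable over m. *)

theory Submission
  imports Defs
begin

section \<open>The power series of J_k\<close>

definition besselJ_coeff :: "nat \<Rightarrow> nat \<Rightarrow> real" where
  "besselJ_coeff k n =
     (if k \<le> n \<and> even (n - k)
      then (-1) ^ ((n - k) div 2) / (fact ((n - k) div 2) * fact ((n - k) div 2 + k) * 2 ^ n)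
      else 0)"

lemma besselJ_coeff_at: "besselJ_coeff k (2 * j + k) = (-1) ^ j / (fact j * fact (j + k) * 2 ^ (2 * j + k))"
  by (simp add: besselJ_coeff_def)

lemma besselJ_coeff_eq_0: "n \<notin> range (\<lambda>j. 2 * j + k) \<Longrightarrow> besselJ_coeff k n = 0"
proof (rule ccontr)
  assume n: "n \<notin> range (\<lambda>j. 2 * j + k)" and "besselJ_coeff k n \<noteq> 0"
  then have "k \<le> n" "even (n - k)" by (auto simp: besselJ_coeff_def split: if_splits)
  then have "n = 2 * ((n - k) div 2) + k" by auto
  with n show False by blast
qed

lemma sums_besselJ_coeff_reindex:
  assumes "\<And>n. besselJ_coeff k n = 0 \<Longrightarrow> f n = 0"
  shows "(\<lambda>j. f (2 * j + k)) sums c \<longleftrightarrow> f sums c"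
proof -
  have "strict_mono (\<lambda>j::nat. 2 * j + k)" by (auto simp: strict_mono_def)
  from sums_mono_reindex[OF this, of f] show ?thesis
    using assms besselJ_coeff_eq_0 by (simp add: o_def)
qed

lemma fact_mult_power_le_fact: "fact k * real (k + 1) ^ j \<le> fact (j + k)"
proof (induction j)
  case (Suc j)
  have "fact k * real (k + 1) ^ Suc j = (fact k * real (k + 1) ^ j) * real (k + 1)" by simp
  also have "\<dots> \<le> fact (j + k) * real (Suc j + k)"
    by (intro mult_mono Suc) auto
  also have "\<dots> = fact (Suc j + k)" by (simp add: algebra_simps)
  finally show ?case .
qed simp

definition besselJ_majorant :: "nat \<Rightarrow> real \<Rightarrow> real" where
  "besselJ_majorant k s = (s / 2) ^ k / fact k * exp (s^2 / (4 * (k + 1)))"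

lemma besselJ_majorant_nonneg: "0 \<le> s \<Longrightarrow> 0 \<le> besselJ_majorant k s"
  unfolding besselJ_majorant_def by simp

lemma besselJ_majorant_mono:
  assumes "0 \<le> s" "s \<le> s'"
  shows "besselJ_majorant k s \<le> besselJ_majorant k s'"
proof -
  have "(s / 2) ^ k \<le> (s' / 2) ^ k" using assms by (intro power_mono) auto
  moreover have "exp (s^2 / (4 * (k + 1))) \<le> exp (s'^2 / (4 * (k + 1)))"
    using assms by (auto intro!: divide_right_mono power_mono)
  ultimately show ?thesis unfolding besselJ_majorant_def using assms
    by (intro mult_mono divide_right_mono) auto
qed

lemma abs_besselJ_coeff_term_le:
  assumes "0 \<le> s"
  shows "\<bar>besselJ_coeff k (2 * j + k)\<bar> * s ^ (2 * j + k)
           \<le> (s / 2) ^ k / fact k * ((s^2 / (4 * (k + 1))) ^ j / fact j)"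
proof -
  have "\<bar>besselJ_coeff k (2 * j + k)\<bar> * s ^ (2 * j + k) = s ^ (2 * j + k) / (fact j * fact (j + k) * 2 ^ (2 * j + k))"
    by (simp add: besselJ_coeff_at abs_mult power_abs)
  also have "\<dots> \<le> s ^ (2 * j + k) / (fact j * (fact k * real (k + 1) ^ j) * 2 ^ (2 * j + k))"
    using assms fact_mult_power_le_fact[of k j]
    by (intro divide_left_mono mult_right_mono mult_left_mono mult_pos_pos) auto
  also have "\<dots> = (s / 2) ^ k / fact k * ((s^2 / (4 * (k + 1))) ^ j / fact j)"
  proof -
    have a: "s ^ (2 * j + k) = s ^ k * (s^2) ^ j" by (simp add: power_add power_mult)
    have b: "(2::real) ^ (2 * j + k) = 2 ^ k * 4 ^ j" by (simp add: power_add power_mult)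
    have "4 + real k * 4 = (1 + real k) * 4" by simp
    then have c: "(4 + real k * 4) ^ j = (1 + real k) ^ j * 4 ^ j" by (simp only: power_mult_distrib)
    show ?thesis unfolding a b power_divide by (simp add: field_simps c)
  qed
  finally show ?thesis .
qed

lemma abs_besselJ_series_le_majorant:
  assumes "0 \<le> s"
  shows "summable (\<lambda>n. \<bar>besselJ_coeff k n\<bar> * s ^ n)"
    and "(\<Sum>n. \<bar>besselJ_coeff k n\<bar> * s ^ n) \<le> besselJ_majorant k s"
proof -
  let ?g = "\<lambda>j. (s / 2) ^ k / fact k * ((s^2 / (4 * (k + 1))) ^ j / fact j)"
  let ?h = "\<lambda>j. \<bar>besselJ_coeff k (2 * j + k)\<bar> * s ^ (2 * j + k)"
  have g: "?g sums besselJ_majorant k s"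
    unfolding besselJ_majorant_def using exp_converges[of "s^2 / (4 * (k + 1))"]
    by (intro sums_mult) (simp add: divide_inverse mult.commute)
  have h: "summable ?h"
    by (rule summable_comparison_test[OF _ sums_summable[OF g]])
       (use abs_besselJ_coeff_term_le[OF assms] assms in auto)
  have le: "suminf ?h \<le> besselJ_majorant k s"
    using suminf_le[OF _ h sums_summable[OF g]] abs_besselJ_coeff_term_le[OF assms] sums_unique[OF g]
    by auto
  have sums: "(\<lambda>n. \<bar>besselJ_coeff k n\<bar> * s ^ n) sums suminf ?h"
    using sums_besselJ_coeff_reindex[of k "\<lambda>n. \<bar>besselJ_coeff k n\<bar> * s ^ n"] summable_sums[OF h]
    by simp
  from sums show "summable (\<lambda>n. \<bar>besselJ_coeff k n\<bar> * s ^ n)"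
    by (rule sums_summable)
  from sums le show "(\<Sum>n. \<bar>besselJ_coeff k n\<bar> * s ^ n) \<le> besselJ_majorant k s"
    by (simp add: sums_iff)
qed

lemma summable_besselJ_coeff: "summable (\<lambda>n. besselJ_coeff k n * t ^ n)"
  using abs_besselJ_series_le_majorant(1)[of "\<bar>t\<bar>" k]
  by (rule summable_comparison_test[rotated]) (auto simp: abs_mult power_abs)

lemma besselJ_nat_eq_suminf: "besselJ_nat k t = (\<Sum>n. besselJ_coeff k n * t ^ n)"
proof -
  have "(\<lambda>j. (-1) ^ j / (fact j * fact (j + k)) * (t / 2) ^ (2 * j + k)) sums (\<Sum>n. besselJ_coeff k n * t ^ n)"
    using sums_besselJ_coeff_reindex[of k "\<lambda>n. besselJ_coeff k n * t ^ n"]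
      summable_sums[OF summable_besselJ_coeff]
    by (simp add: besselJ_coeff_at power_divide)
  then show ?thesis unfolding besselJ_nat_def by (rule sums_unique[symmetric])
qed

lemma abs_besselJ_nat_le_majorant: "\<bar>besselJ_nat k t\<bar> \<le> besselJ_majorant k \<bar>t\<bar>"
proof -
  have "\<bar>besselJ_nat k t\<bar> \<le> (\<Sum>n. \<bar>besselJ_coeff k n * t ^ n\<bar>)"
    unfolding besselJ_nat_eq_suminf
    by (rule summable_rabs) (use abs_besselJ_series_le_majorant(1)[of "\<bar>t\<bar>" k] in \<open>simp add: abs_mult power_abs\<close>)
  also have "\<dots> \<le> besselJ_majorant k \<bar>t\<bar>"
    using abs_besselJ_series_le_majorant(2)[of "\<bar>t\<bar>" k] by (simp add: abs_mult power_abs)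
  finally show ?thesis .
qed

lemma power_series_euler_operator:
  fixes a :: "nat \<Rightarrow> real"
  assumes "\<And>t. summable (\<lambda>n. a n * t ^ n)"
  shows "summable (\<lambda>n. (real n * a n) * t ^ n)"
    and "t * (\<Sum>n. diffs a n * t ^ n) = (\<Sum>n. (real n * a n) * t ^ n)"
proof -
  let ?h = "\<lambda>n. (real n * a n) * t ^ n"
  have sd: "summable (\<lambda>n. diffs a n * t ^ n)" by (rule termdiff_converges_all[OF assms])
  have shift: "(\<lambda>n. ?h (Suc n)) = (\<lambda>n. (diffs a n * t ^ n) * t)"
    by (auto simp: diffs_def)
  then show sh: "summable ?h"
    using summable_Suc_iff[of ?h] summable_mult2[OF sd] by simp
  have "(\<Sum>n. ?h n) = (\<Sum>n. ?h (Suc n))"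
    using suminf_split_head[OF sh] by simp
  also have "\<dots> = t * (\<Sum>n. diffs a n * t ^ n)"
    unfolding shift by (subst suminf_mult2[OF sd, symmetric]) simp
  finally show "t * (\<Sum>n. diffs a n * t ^ n) = (\<Sum>n. (real n * a n) * t ^ n)" by simp
qed

definition besselJ_euler :: "nat \<Rightarrow> real \<Rightarrow> real" where
  "besselJ_euler k t = (\<Sum>n. (real n * besselJ_coeff k n) * t ^ n)"

lemma summable_besselJ_euler: "summable (\<lambda>n. (real n * besselJ_coeff k n) * t ^ n)"
  by (rule power_series_euler_operator(1)[OF summable_besselJ_coeff])

lemma has_real_derivative_besselJ_nat:
  assumes "t \<noteq> 0"
  shows "(besselJ_nat k has_real_derivative besselJ_euler k t / t) (at t)"
proof -
  have "besselJ_nat k = (\<lambda>t. \<Sum>n. besselJ_coeff k n * t ^ n)"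
    using besselJ_nat_eq_suminf by auto
  moreover have "t * (\<Sum>n. diffs (besselJ_coeff k) n * t ^ n) = besselJ_euler k t"
    unfolding besselJ_euler_def by (rule power_series_euler_operator(2)[OF summable_besselJ_coeff])
  ultimately show ?thesis
    using termdiffs_strong_converges_everywhere[OF summable_besselJ_coeff, of k t] assms
    by (metis nonzero_mult_div_cancel_left)
qed

lemma besselJ_coeff_recurrence: "(real (n + 2)^2 - real k^2) * besselJ_coeff k (n + 2) = - besselJ_coeff k n"
proof (cases "n + 2 \<in> range (\<lambda>j. 2 * j + k)")
  case False
  have "n \<notin> range (\<lambda>j. 2 * j + k)"
  proof
    assume "n \<in> range (\<lambda>j. 2 * j + k)"
    then obtain j where "n + 2 = 2 * Suc j + k" by auto
    with False show False by blast
  qed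
  with False show ?thesis by (simp add: besselJ_coeff_eq_0)
next
  case True
  then obtain i where i: "n + 2 = 2 * i + k" by auto
  show ?thesis
  proof (cases i)
    case 0
    then show ?thesis using i by (simp add: besselJ_coeff_def)
  next
    case (Suc j)
    then have n: "n = 2 * j + k" using i by simp
    have "besselJ_coeff k (n + 2) = besselJ_coeff k (2 * Suc j + k)" using n by (simp add: algebra_simps)
    also have "\<dots> = (-1) ^ Suc j / (fact (Suc j) * fact (Suc j + k) * 2 ^ (2 * Suc j + k))"
      by (rule besselJ_coeff_at)
    finally have c2: "besselJ_coeff k (n + 2) = (-1) ^ Suc j / (fact (Suc j) * fact (Suc j + k) * 2 ^ (2 * Suc j + k))" .
    have c0: "besselJ_coeff k n = (-1) ^ j / (fact j * fact (j + k) * 2 ^ (2 * j + k))"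
      using n besselJ_coeff_at by simp
    have fa: "fact (Suc j + k) = real (Suc j + k) * fact (j + k)" by simp
    have pw: "(2::real) ^ (2 * Suc j + k) = 4 * 2 ^ (2 * j + k)" by (simp add: power_add)
    have sq: "real (n + 2)^2 - real k^2 = 4 * real (Suc j) * real (Suc j + k)"
      using n by (simp add: power2_eq_square algebra_simps)
    have cancel: "\<And>a b A B C s. a > 0 \<Longrightarrow> b > 0 \<Longrightarrow> A > 0 \<Longrightarrow> B > 0 \<Longrightarrow> C > 0 \<Longrightarrow>
        4 * a * b * (- s / (a * A * (b * B) * (4 * C))) = - (s / (A * B * (C::real)))"
      by (simp add: field_simps)
    show ?thesis unfolding c2 c0 sq fa pw fact_Suc power_Suc
      using cancel[of "real (Suc j)" "real (Suc j + k)" "fact j" "fact (j + k)" "2 ^ (2 * j + k)" "(-1) ^ j"]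
      by (simp add: algebra_simps)
  qed
qed

lemma bessel_equation: "(\<Sum>n. (real n * (real n * besselJ_coeff k n)) * t ^ n) = (real k^2 - t^2) * besselJ_nat k t"
proof -
  let ?c = "\<lambda>n. (real n^2 - real k^2) * besselJ_coeff k n * t ^ n"
  have J: "(\<lambda>n. besselJ_coeff k n * t ^ n) sums besselJ_nat k t"
    using besselJ_nat_eq_suminf summable_sums[OF summable_besselJ_coeff] by metis
  have "?c (n + 2) = - (t^2) * (besselJ_coeff k n * t ^ n)" for n
  proof -
    have "?c (n + 2) = - besselJ_coeff k n * t ^ (n + 2)"
      by (simp only: besselJ_coeff_recurrence)
    then show ?thesis by (simp add: power_add power2_eq_square)
  qed
  then have "(\<lambda>n. ?c (n + 2)) sums (- (t^2) * besselJ_nat k t)"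
    using sums_mult[OF J, of "- (t^2)"] by simp
  moreover have "(\<Sum>i<2. ?c i) = 0"
  proof -
    have "(real n^2 - real k^2) * besselJ_coeff k n = 0" if "n < 2" for n
      using that by (cases k) (auto simp: besselJ_coeff_def less_2_cases_iff)
    from this[of 0] this[of 1] have "?c 0 = 0" "?c 1 = 0" by simp_all
    moreover have "(\<Sum>i<2. ?c i) = ?c 0 + ?c 1" by (simp add: numeral_2_eq_2)
    ultimately show ?thesis by (metis add.right_neutral)
  qed
  ultimately have "?c sums (- (t^2) * besselJ_nat k t)"
    using sums_iff_shift[of ?c 2] by simp
  from sums_add[OF this sums_mult[OF J, of "real k^2"]] show ?thesis
    by (simp add: sums_iff power2_eq_square algebra_simps)
qed

lemma has_real_derivative_besselJ_euler:
  assumes "t \<noteq> 0"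
  shows "(besselJ_euler k has_real_derivative (real k^2 - t^2) * besselJ_nat k t / t) (at t)"
proof -
  have "t * (\<Sum>n. diffs (\<lambda>n. real n * besselJ_coeff k n) n * t ^ n) = (real k^2 - t^2) * besselJ_nat k t"
    using power_series_euler_operator(2)[OF summable_besselJ_euler] bessel_equation by simp
  with assms have "(\<Sum>n. diffs (\<lambda>n. real n * besselJ_coeff k n) n * t ^ n) = (real k^2 - t^2) * besselJ_nat k t / t"
    by (simp add: field_simps)
  then show ?thesis
    using termdiffs_strong_converges_everywhere[OF summable_besselJ_euler, of k t]
    unfolding besselJ_euler_def[abs_def] by simp
qed

lemma continuous_on_besselJ_nat [continuous_intros]: "continuous_on S (besselJ_nat k)"
proof -
  have "isCont (\<lambda>t. \<Sum>n. besselJ_coeff k n * t ^ n) t" for t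
    by (rule DERIV_isCont[OF termdiffs_strong_converges_everywhere[OF summable_besselJ_coeff]])
  then show ?thesis
    unfolding besselJ_nat_eq_suminf[abs_def] by (intro continuous_at_imp_continuous_on) auto
qed

lemma continuous_on_besselJ_euler [continuous_intros]: "continuous_on S (besselJ_euler k)"
proof -
  have "isCont (\<lambda>t. \<Sum>n. (real n * besselJ_coeff k n) * t ^ n) t" for t
    by (rule DERIV_isCont[OF termdiffs_strong_converges_everywhere[OF summable_besselJ_euler]])
  then show ?thesis
    unfolding besselJ_euler_def[abs_def] by (intro continuous_at_imp_continuous_on) auto
qed

lemma abs_besselJ_euler_le_majorant: "\<bar>besselJ_euler k t\<bar> \<le> besselJ_majorant k (2 * \<bar>t\<bar>)"
proof -
  have sA: "summable (\<lambda>n. \<bar>besselJ_coeff k n\<bar> * (2 * \<bar>t\<bar>) ^ n)"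
    by (rule abs_besselJ_series_le_majorant(1)) simp
  have le: "\<bar>(real n * besselJ_coeff k n) * t ^ n\<bar> \<le> \<bar>besselJ_coeff k n\<bar> * (2 * \<bar>t\<bar>) ^ n" for n
  proof -
    have "real n \<le> 2 ^ n"
      using less_exp[of n] by (metis less_imp_le of_nat_le_iff of_nat_numeral of_nat_power)
    then have "real n * (\<bar>besselJ_coeff k n\<bar> * \<bar>t\<bar> ^ n) \<le> 2 ^ n * (\<bar>besselJ_coeff k n\<bar> * \<bar>t\<bar> ^ n)"
      by (intro mult_right_mono) auto
    moreover have "\<bar>(real n * besselJ_coeff k n) * t ^ n\<bar> = real n * (\<bar>besselJ_coeff k n\<bar> * \<bar>t\<bar> ^ n)"
      by (simp add: abs_mult power_abs)
    ultimately show ?thesis by (simp add: power_mult_distrib mult.left_commute)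
  qed
  have s1: "summable (\<lambda>n. \<bar>(real n * besselJ_coeff k n) * t ^ n\<bar>)"
    by (rule summable_comparison_test[OF _ sA]) (use le in auto)
  have "\<bar>besselJ_euler k t\<bar> \<le> (\<Sum>n. \<bar>(real n * besselJ_coeff k n) * t ^ n\<bar>)"
    unfolding besselJ_euler_def by (rule summable_rabs[OF s1])
  also have "\<dots> \<le> (\<Sum>n. \<bar>besselJ_coeff k n\<bar> * (2 * \<bar>t\<bar>) ^ n)" by (rule suminf_le[OF le s1 sA])
  also have "\<dots> \<le> besselJ_majorant k (2 * \<bar>t\<bar>)" by (rule abs_besselJ_series_le_majorant(2)) simp
  finally show ?thesis .
qed

section \<open>Decay of J_k\<close>

definition bessel_potential :: "nat \<Rightarrow> real \<Rightarrow> real" where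
  "bessel_potential k t = t^2 - real k^2 + 1/4"

lemma has_real_derivative_bessel_potential: "(bessel_potential k has_real_derivative 2 * t) (at t)"
  unfolding bessel_potential_def[abs_def] by (auto intro!: derivative_eq_intros)

lemma continuous_on_bessel_potential [continuous_intros]: "continuous_on S (bessel_potential k)"
  unfolding bessel_potential_def[abs_def] by (intro continuous_intros)

lemma bessel_potential_pos:
  assumes "real k \<le> t"
  shows "0 < bessel_potential k t"
proof -
  from assms have "real k^2 \<le> t^2" by (intro power_mono) auto
  then show ?thesis by (simp add: bessel_potential_def)
qed

text \<open>For w t = sqrt t * J_k t one has t w' t = sqrt t * (besselJ_euler k t + J_k t / 2) and
  t^2 w'' t + bessel_potential k t * w t = 0. The energies below are w^2 + (t w')^2 / bessel_potential
  and (bessel_potential * w^2 + (t w')^2) / t^2; their derivatives have the sign of 1/4 - k^2,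
  resp. k^2 - 1/4, so the first one decreases for k >= 1 and the second one for k = 0.\<close>

definition bessel_energy :: "nat \<Rightarrow> real \<Rightarrow> real" where
  "bessel_energy k t = t * besselJ_nat k t^2 + t * (besselJ_euler k t + besselJ_nat k t / 2)^2 / bessel_potential k t"

definition bessel_energy0 :: "nat \<Rightarrow> real \<Rightarrow> real" where
  "bessel_energy0 k t = (bessel_potential k t * besselJ_nat k t^2 + (besselJ_euler k t + besselJ_nat k t / 2)^2) / t"

lemma has_real_derivative_bessel_energy:
  assumes "0 < t" "0 < bessel_potential k t"
  shows "(bessel_energy k has_real_derivative
          2 * (besselJ_euler k t + besselJ_nat k t / 2)^2 * (1/4 - real k^2) / bessel_potential k t^2) (at t)"
proof -
  note J = has_real_derivative_besselJ_nat[of t k] and P = has_real_derivative_besselJ_euler[of t k]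
  show ?thesis
    unfolding bessel_energy_def[abs_def]
    apply (rule derivative_eq_intros J P has_real_derivative_bessel_potential refl | use assms in force)+
    using assms apply (simp add: field_simps)
    unfolding bessel_potential_def apply (simp add: algebra_simps power2_eq_square)
    done
qed

lemma has_real_derivative_bessel_energy0:
  assumes "0 < t"
  shows "(bessel_energy0 k has_real_derivative (2 * real k^2 - 1/2) * besselJ_nat k t^2 / t^2) (at t)"
proof -
  note J = has_real_derivative_besselJ_nat[of t k] and P = has_real_derivative_besselJ_euler[of t k]
  show ?thesis
    unfolding bessel_energy0_def[abs_def]
    apply (rule derivative_eq_intros J P has_real_derivative_bessel_potential refl | use assms in force)+
    using assms apply (simp add: field_simps)
    unfolding bessel_potential_def apply (simp add: algebra_simps power2_eq_square eval_nat_numeral)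
    done
qed

lemma besselJ_nat_sq_le_bessel_energy:
  assumes "1 \<le> k" "real k + 1 \<le> t"
  shows "t * besselJ_nat k t^2 \<le> bessel_energy k (real k + 1)"
proof -
  have "t * besselJ_nat k t^2 \<le> bessel_energy k t"
    unfolding bessel_energy_def using bessel_potential_pos[of k t] assms by (intro add_increasing2) auto
  also have "\<dots> \<le> bessel_energy k (real k + 1)"
  proof (rule DERIV_nonpos_imp_decreasing_open[OF assms(2)])
    fix s assume s: "real k + 1 < s" "s < t"
    then have "0 < bessel_potential k s" by (intro bessel_potential_pos) auto
    moreover have "1 \<le> real k^2" using assms by simp
    ultimately show "\<exists>D. (bessel_energy k has_real_derivative D) (at s) \<and> D \<le> 0"
      using has_real_derivative_bessel_energy[of s k] s
      by (intro exI conjI) (auto intro!: divide_nonpos_nonneg mult_nonneg_nonpos)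
  next
    have "bessel_potential k s \<noteq> 0" if "s \<in> {real k + 1..t}" for s
      using bessel_potential_pos[of k s] that by auto
    then show "continuous_on {real k + 1..t} (bessel_energy k)"
      unfolding bessel_energy_def[abs_def] by (intro continuous_intros) auto
  qed
  finally show ?thesis .
qed

lemma besselJ0_sq_le_bessel_energy0:
  assumes "1 \<le> t"
  shows "t * besselJ_nat 0 t^2 \<le> bessel_energy0 0 1"
proof -
  have "t * besselJ_nat 0 t^2 = (t^2 * besselJ_nat 0 t^2) / t" using assms by (simp add: power2_eq_square)
  also have "\<dots> \<le> bessel_energy0 0 t" unfolding bessel_energy0_def using assms
    by (intro divide_right_mono add_increasing2 mult_right_mono) (auto simp: bessel_potential_def)
  also have "\<dots> \<le> bessel_energy0 0 1"
  proof (rule DERIV_nonpos_imp_decreasing_open[OF assms])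
    fix s assume "1 < s" "s < t"
    then show "\<exists>D. (bessel_energy0 0 has_real_derivative D) (at s) \<and> D \<le> 0"
      using has_real_derivative_bessel_energy0[of s 0]
      by (intro exI conjI) (auto intro!: divide_nonpos_nonneg mult_nonpos_nonneg)
  next
    show "continuous_on {1..t} (bessel_energy0 0)"
      unfolding bessel_energy0_def[abs_def] by (intro continuous_intros) auto
  qed
  finally show ?thesis .
qed

lemma besselJ_sq_at_turning_point_le:
  shows "besselJ_nat k (real k + 1)^2 \<le> besselJ_majorant k (2 * (real k + 1))^2"
    and "(besselJ_euler k (real k + 1) + besselJ_nat k (real k + 1) / 2)^2
           \<le> 4 * besselJ_majorant k (2 * (real k + 1))^2"
proof -
  define M where "M = besselJ_majorant k (2 * (real k + 1))"
  have J: "\<bar>besselJ_nat k (real k + 1)\<bar> \<le> M"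
    using abs_besselJ_nat_le_majorant[of k "real k + 1"] besselJ_majorant_mono[of "real k + 1" "2 * (real k + 1)" k]
    unfolding M_def by simp
  have P: "\<bar>besselJ_euler k (real k + 1)\<bar> \<le> M"
    using abs_besselJ_euler_le_majorant[of k "real k + 1"] unfolding M_def by simp
  show "besselJ_nat k (real k + 1)^2 \<le> besselJ_majorant k (2 * (real k + 1))^2"
    using power_mono[OF J, of 2] unfolding M_def by simp
  have "\<bar>besselJ_euler k (real k + 1) + besselJ_nat k (real k + 1) / 2\<bar> \<le> 2 * M"
    using J P by linarith
  from power_mono[OF this, of 2]
  show "(besselJ_euler k (real k + 1) + besselJ_nat k (real k + 1) / 2)^2 \<le> 4 * besselJ_majorant k (2 * (real k + 1))^2"
    unfolding M_def by (simp add: power_mult_distrib)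
qed

lemma besselJ_nat_tail_bound:
  assumes "real k + 1 \<le> t"
  shows "t * besselJ_nat k t^2 \<le> 6 * (real k + 1) * besselJ_majorant k (2 * (real k + 1))^2"
proof -
  define M where "M = besselJ_majorant k (2 * (real k + 1))"
  note J2 = besselJ_sq_at_turning_point_le(1)[of k, folded M_def]
    and R2 = besselJ_sq_at_turning_point_le(2)[of k, folded M_def]
  show ?thesis
  proof (cases "1 \<le> k")
    case True
    have "1 \<le> bessel_potential k (real k + 1)"
      unfolding bessel_potential_def by (simp add: power2_eq_square algebra_simps)
    moreover have "t * besselJ_nat k t^2 \<le> bessel_energy k (real k + 1)"
      by (rule besselJ_nat_sq_le_bessel_energy[OF True assms])
    moreover have "bessel_energy k (real k + 1) \<le> (real k + 1) * M^2 + (real k + 1) * (4 * M^2) / 1"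
      unfolding bessel_energy_def
      by (intro add_mono mult_left_mono frac_le R2) (use J2 \<open>1 \<le> bessel_potential k (real k + 1)\<close> in auto)
    moreover have "(real k + 1) * M^2 + (real k + 1) * (4 * M^2) / 1 = 5 * ((real k + 1) * M^2)"
      by (simp add: algebra_simps)
    ultimately have "t * besselJ_nat k t^2 \<le> 5 * ((real k + 1) * M^2)" by linarith
    moreover have "0 \<le> (real k + 1) * M^2" by simp
    ultimately have "t * besselJ_nat k t^2 \<le> 6 * (real k + 1) * M^2"
      by (simp only: mult.assoc)
    then show ?thesis unfolding M_def .
  next
    case False
    then have "k = 0" by simp
    have "t * besselJ_nat k t^2 \<le> bessel_energy0 0 1"
      using besselJ0_sq_le_bessel_energy0[of t] assms \<open>k = 0\<close> by simp
    also have "\<dots> = 5/4 * besselJ_nat 0 1^2 + (besselJ_euler 0 1 + besselJ_nat 0 1 / 2)^2"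
      unfolding bessel_energy0_def bessel_potential_def by simp
    also have "\<dots> \<le> 6 * (real k + 1) * M^2"
    proof -
      have "besselJ_nat 0 1^2 \<le> M^2" "(besselJ_euler 0 1 + besselJ_nat 0 1 / 2)^2 \<le> 4 * M^2"
        "6 * (real k + 1) * M^2 = 6 * M^2"
        using J2 R2 \<open>k = 0\<close> by simp_all
      with zero_le_power2[of M] show ?thesis by linarith
    qed
    finally show ?thesis unfolding M_def .
  qed
qed

lemma sums_pow_div_fact: "(\<lambda>n. x ^ n / fact n) sums exp (x::real)"
  using exp_converges[of x] by (simp add: divide_inverse mult.commute)

lemma pow_div_fact_le_exp:
  assumes "0 \<le> x"
  shows "x ^ n / fact n \<le> exp (x::real)"
proof -
  have "sum (\<lambda>i. x ^ i / fact i) {n} \<le> suminf (\<lambda>i. x ^ i / fact i)"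
    by (rule sum_le_suminf[OF sums_summable[OF sums_pow_div_fact]]) (use assms in auto)
  then show ?thesis using sums_unique[OF sums_pow_div_fact] by simp
qed

lemma besselJ_majorant_le_exp: "besselJ_majorant k (2 * (real k + 1)) \<le> exp (2 * real k + 2)"
proof -
  have "(real k + 1) ^ Suc k / fact (Suc k) = ((real k + 1) * (real k + 1) ^ k) / ((real k + 1) * fact k)"
    by (simp add: algebra_simps)
  then have "(real k + 1) ^ k / fact k = (real k + 1) ^ Suc k / fact (Suc k)"
    by (simp only: mult_divide_mult_cancel_left_if) simp
  also have "\<dots> \<le> exp (real k + 1)" by (rule pow_div_fact_le_exp) simp
  finally have "(real k + 1) ^ k / fact k * exp (real k + 1) \<le> exp (real k + 1) * exp (real k + 1)"
    by (rule mult_right_mono) simp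
  moreover have "besselJ_majorant k (2 * (real k + 1)) = (real k + 1) ^ k / fact k * exp (real k + 1)"
  proof -
    have e1: "2 * (real k + 1) / 2 = real k + 1" by simp
    have e2: "(2 * (real k + 1))^2 / (4 * (k + 1)) = real k + 1" by (simp add: power2_eq_square field_simps)
    show ?thesis unfolding besselJ_majorant_def e1 e2 by simp
  qed
  ultimately have "besselJ_majorant k (2 * (real k + 1)) \<le> exp (real k + 1) * exp (real k + 1)"
    by simp
  then show ?thesis by (simp add: exp_add[symmetric] algebra_simps)
qed

definition besselJ_bound :: "nat \<Rightarrow> real" where
  "besselJ_bound k = 4 * exp 2 * exp 3 ^ k"

lemma one_le_besselJ_bound: "1 \<le> besselJ_bound k"
proof -
  have "1 * 1 \<le> exp (2::real) * exp 3 ^ k" by (intro mult_mono one_le_power) auto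
  then show ?thesis unfolding besselJ_bound_def by simp
qed

lemma turning_point_majorant_le_besselJ_bound:
  "(3 * sqrt (real k + 1) + 1) * besselJ_majorant k (2 * (real k + 1)) \<le> besselJ_bound k"
proof -
  have "sqrt (real k + 1) * 1 \<le> sqrt (real k + 1) * sqrt (real k + 1)"
    by (intro mult_left_mono) auto
  also have "\<dots> = real k + 1" by simp
  also have "\<dots> \<le> exp (real k)" using exp_ge_add_one_self[of "real k"] by linarith
  finally have "3 * sqrt (real k + 1) + 1 \<le> 4 * exp (real k)"
    using one_le_exp_iff[of "real k"] by linarith
  then have "(3 * sqrt (real k + 1) + 1) * besselJ_majorant k (2 * (real k + 1))
      \<le> (4 * exp (real k)) * exp (2 * real k + 2)"
    using besselJ_majorant_le_exp[of k] besselJ_majorant_nonneg[of "2 * (real k + 1)" k]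
    by (intro mult_mono) auto
  also have "\<dots> = besselJ_bound k"
    by (simp add: besselJ_bound_def exp_add[symmetric] exp_of_nat_mult[symmetric] algebra_simps)
  finally show ?thesis .
qed

lemma abs_besselJ_nat_le_bound:
  assumes "0 \<le> t"
  shows "\<bar>besselJ_nat k t\<bar> \<le> besselJ_bound k" and "sqrt t * \<bar>besselJ_nat k t\<bar> \<le> besselJ_bound k"
proof -
  define M where "M = besselJ_majorant k (2 * (real k + 1))"
  have M0: "0 \<le> M" unfolding M_def by (rule besselJ_majorant_nonneg) simp
  have "\<bar>besselJ_nat k t\<bar> \<le> 3 * sqrt (real k + 1) * M + M \<and> sqrt t * \<bar>besselJ_nat k t\<bar> \<le> 3 * sqrt (real k + 1) * M + M"
  proof (cases "t \<le> real k + 1")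
    case True
    have J: "\<bar>besselJ_nat k t\<bar> \<le> M"
      using abs_besselJ_nat_le_majorant[of k t] besselJ_majorant_mono[of t "2 * (real k + 1)" k] assms True
      unfolding M_def by simp
    moreover have "sqrt t * \<bar>besselJ_nat k t\<bar> \<le> sqrt (real k + 1) * M"
      using True assms J by (intro mult_mono) auto
    moreover have "M \<le> sqrt (real k + 1) * M" using M0 by (simp add: mult_le_cancel_right1)
    ultimately show ?thesis using M0 by (simp add: add_increasing)
  next
    case False
    have "(sqrt t * \<bar>besselJ_nat k t\<bar>)^2 = t * besselJ_nat k t^2"
      using assms by (simp add: power_mult_distrib)
    also have "\<dots> \<le> 6 * (real k + 1) * M^2"
      unfolding M_def using False by (intro besselJ_nat_tail_bound) simp
    also have "\<dots> \<le> 9 * (real k + 1) * M^2"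
      by (intro mult_right_mono) auto
    also have "\<dots> = (3 * sqrt (real k + 1) * M)^2"
      by (simp add: power_mult_distrib)
    finally have "sqrt t * \<bar>besselJ_nat k t\<bar> \<le> 3 * sqrt (real k + 1) * M"
      by (rule power2_le_imp_le) (use M0 in auto)
    moreover have "\<bar>besselJ_nat k t\<bar> \<le> sqrt t * \<bar>besselJ_nat k t\<bar>"
      using False by (simp add: mult_le_cancel_right1)
    ultimately show ?thesis using M0 by linarith
  qed
  moreover have "3 * sqrt (real k + 1) * M + M \<le> besselJ_bound k"
    using turning_point_majorant_le_besselJ_bound[of k] unfolding M_def by (simp add: algebra_simps)
  ultimately show "\<bar>besselJ_nat k t\<bar> \<le> besselJ_bound k" "sqrt t * \<bar>besselJ_nat k t\<bar> \<le> besselJ_bound k"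
    by linarith+
qed

definition besselJ_small_bound :: "real \<Rightarrow> nat \<Rightarrow> real" where
  "besselJ_small_bound X k = (X / 2) ^ k / fact k * exp (X^2 / 4)"

lemma besselJ_small_bound_nonneg: "0 \<le> X \<Longrightarrow> 0 \<le> besselJ_small_bound X k"
  by (simp add: besselJ_small_bound_def)

lemma abs_besselJ_nat_le_small_bound:
  assumes "0 \<le> t" "t \<le> X"
  shows "\<bar>besselJ_nat k t\<bar> \<le> besselJ_small_bound X k"
proof -
  have "\<bar>besselJ_nat k t\<bar> \<le> besselJ_majorant k X"
    using abs_besselJ_nat_le_majorant[of k t] besselJ_majorant_mono[of t X k] assms by simp
  also have "\<dots> \<le> besselJ_small_bound X k"
  proof -
    have "X^2 / (4 * (k + 1)) \<le> X^2 / 4" by (rule divide_left_mono) auto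
    then show ?thesis unfolding besselJ_majorant_def besselJ_small_bound_def using assms
      by (intro mult_left_mono) auto
  qed
  finally show ?thesis .
qed

section \<open>Bessel functions of integer order\<close>

lemma besselJ_bound_nonneg: "0 \<le> besselJ_bound k"
  by (simp add: besselJ_bound_def)

lemma abs_besselJ: "\<bar>besselJ m t\<bar> = \<bar>besselJ_nat (nat \<bar>m\<bar>) t\<bar>"
  by (simp add: besselJ_def abs_mult power_abs)

lemma abs_besselJ_le_bound: "0 \<le> t \<Longrightarrow> \<bar>besselJ m t\<bar> \<le> besselJ_bound (nat \<bar>m\<bar>)"
  using abs_besselJ_nat_le_bound(1) abs_besselJ by metis

lemma sqrt_mult_abs_besselJ_le_bound: "0 \<le> t \<Longrightarrow> sqrt t * \<bar>besselJ m t\<bar> \<le> besselJ_bound (nat \<bar>m\<bar>)"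
  using abs_besselJ_nat_le_bound(2) abs_besselJ by metis

lemma abs_besselJ_le_small_bound: "0 \<le> t \<Longrightarrow> t \<le> X \<Longrightarrow> \<bar>besselJ m t\<bar> \<le> besselJ_small_bound X (nat \<bar>m\<bar>)"
  using abs_besselJ_nat_le_small_bound abs_besselJ by metis

lemma one_le_powr_nonpos:
  fixes t a :: real
  assumes "0 < t" "t \<le> 1" "a \<le> 0"
  shows "1 \<le> t powr a"
proof -
  have "t powr (- a) \<le> 1" using assms by (intro powr_le1) auto
  then have "1 \<le> inverse (t powr (- a))" using assms by (simp add: one_le_inverse)
  then show ?thesis by (simp add: powr_minus[symmetric])
qed

lemma abs_besselJ_le_powr:
  assumes "0 < t" "-1/2 \<le> a" "a \<le> 0"
  shows "\<bar>besselJ m t\<bar> \<le> besselJ_bound (nat \<bar>m\<bar>) * t powr a"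
proof (cases "t \<le> 1")
  case True
  have "1 \<le> t powr a" using True assms by (intro one_le_powr_nonpos) auto
  then have "besselJ_bound (nat \<bar>m\<bar>) * 1 \<le> besselJ_bound (nat \<bar>m\<bar>) * t powr a"
    by (intro mult_left_mono besselJ_bound_nonneg)
  then show ?thesis using abs_besselJ_le_bound[of t m] assms by simp
next
  case False
  have "sqrt t * \<bar>besselJ m t\<bar> \<le> besselJ_bound (nat \<bar>m\<bar>)"
    using sqrt_mult_abs_besselJ_le_bound[of t m] assms by simp
  then have "\<bar>besselJ m t\<bar> \<le> besselJ_bound (nat \<bar>m\<bar>) / sqrt t"
    using assms by (simp add: field_simps)
  also have "\<dots> = besselJ_bound (nat \<bar>m\<bar>) * t powr (- (1/2))"
  proof -
    have e1: "t powr (- (1/2)) = inverse (t powr (1/2))" by (rule powr_minus)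
    have e2: "t powr (1/2) = sqrt t" using assms by (intro powr_half_sqrt) simp
    show ?thesis unfolding e1 e2 by (simp add: divide_inverse)
  qed
  also have "\<dots> \<le> besselJ_bound (nat \<bar>m\<bar>) * t powr a"
    using False assms by (intro mult_left_mono besselJ_bound_nonneg powr_mono) auto
  finally show ?thesis .
qed

lemma abs_besselJ_div_le:
  assumes "0 < y" "0 < X"
  shows "\<bar>besselJ m (X / y)\<bar> \<le> besselJ_bound (nat \<bar>m\<bar>) * min 1 (sqrt (y / X))"
proof -
  have "sqrt (X / y) * \<bar>besselJ m (X / y)\<bar> \<le> besselJ_bound (nat \<bar>m\<bar>)"
    using sqrt_mult_abs_besselJ_le_bound[of "X / y" m] assms by simp
  then have "\<bar>besselJ m (X / y)\<bar> \<le> besselJ_bound (nat \<bar>m\<bar>) / sqrt (X / y)"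
    using assms by (simp add: field_simps)
  also have "\<dots> = besselJ_bound (nat \<bar>m\<bar>) * sqrt (y / X)"
    using assms by (simp add: real_sqrt_divide field_simps)
  finally have "\<bar>besselJ m (X / y)\<bar> \<le> besselJ_bound (nat \<bar>m\<bar>) * sqrt (y / X)" .
  moreover have "\<bar>besselJ m (X / y)\<bar> \<le> besselJ_bound (nat \<bar>m\<bar>)"
    using abs_besselJ_le_bound[of "X / y" m] assms by simp
  ultimately show ?thesis by (cases "sqrt (y / X) \<le> 1") (simp_all only: min_absorb1 min_absorb2 linorder_not_le less_imp_le mult_1_right)
qed

lemma besselJ_bound_add_le: "besselJ_bound (nat \<bar>c + m\<bar>) \<le> besselJ_bound (nat \<bar>c\<bar>) * exp 3 ^ nat \<bar>m\<bar>"
proof -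
  have "nat \<bar>c + m\<bar> \<le> nat \<bar>c\<bar> + nat \<bar>m\<bar>" by (simp add: nat_le_iff abs_triangle_ineq)
  then have "exp 3 ^ nat \<bar>c + m\<bar> \<le> exp (3::real) ^ (nat \<bar>c\<bar> + nat \<bar>m\<bar>)"
    by (intro power_increasing) auto
  then show ?thesis unfolding besselJ_bound_def by (simp add: power_add)
qed

lemma continuous_on_besselJ [continuous_intros]: "continuous_on S (besselJ m)"
proof (cases "0 \<le> m")
  case True
  then have "besselJ m = besselJ_nat (nat m)" by (auto simp: besselJ_def fun_eq_iff)
  then show ?thesis by (simp add: continuous_on_besselJ_nat)
next
  case False
  then have "besselJ m = (\<lambda>t. (-1) ^ nat (- m) * besselJ_nat (nat (- m)) t)"
    by (auto simp: besselJ_def fun_eq_iff)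
  then show ?thesis by (auto intro!: continuous_intros)
qed

lemma borel_measurable_besselJ [measurable]: "besselJ m \<in> borel_measurable borel"
  by (rule borel_measurable_continuous_onI[OF continuous_on_besselJ])

lemma borel_measurable_jfun [measurable]: "jfun m \<in> borel_measurable borel"
  unfolding jfun_def[abs_def] by measurable

lemma norm_jfun: "norm (jfun m t) = 2 * pi * \<bar>besselJ m (4 * pi * t)\<bar>"
  by (simp add: jfun_def norm_mult norm_power_int)

lemma summable_on_sum:
  fixes f :: "'i \<Rightarrow> 'a \<Rightarrow> real"
  assumes "finite I" "\<And>i. i \<in> I \<Longrightarrow> f i summable_on A"
  shows "(\<lambda>x. \<Sum>i\<in>I. f i x) summable_on A"
  using assms by (induction I rule: finite_induct) (simp_all add: summable_on_add)

lemma summable_on_int_abs: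
  fixes F :: "nat \<Rightarrow> real"
  assumes nn: "\<And>n. 0 \<le> F n" and s: "summable F"
  shows "(\<lambda>z::int. F (nat \<bar>z\<bar>)) summable_on UNIV"
proof -
  let ?G = "\<lambda>z::int. F (nat \<bar>z\<bar>)"
  let ?neg = "\<lambda>n. - int (Suc n)"
  have "F summable_on UNIV" by (rule norm_summable_imp_summable_on) (use s nn in simp)
  moreover have "inj_on int UNIV" "?G \<circ> int = F" by (simp_all add: inj_on_def o_def)
  ultimately have A: "?G summable_on (int ` UNIV)"
    using summable_on_reindex[of int UNIV ?G] by simp
  have "summable (\<lambda>n. F (Suc n))" using s summable_Suc_iff by blast
  with nn have "(\<lambda>n. F (Suc n)) summable_on UNIV"
    by (intro norm_summable_imp_summable_on) simp
  moreover have "inj_on ?neg UNIV" by (simp add: inj_on_def)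
  moreover have "?G \<circ> ?neg = (\<lambda>n. F (Suc n))"
  proof
    fix n
    have "nat \<bar>- int (Suc n)\<bar> = Suc n" by simp
    then show "(?G \<circ> ?neg) n = F (Suc n)" by (simp only: o_def)
  qed
  ultimately have B: "?G summable_on (?neg ` UNIV)"
    using summable_on_reindex[of ?neg UNIV ?G] by simp
  have U: "UNIV = int ` UNIV \<union> ?neg ` UNIV"
  proof -
    have "z \<in> int ` UNIV \<union> ?neg ` UNIV" for z :: int
    proof (cases "z \<ge> 0")
      case True
      then have "z = int (nat z)" by simp
      then have "z \<in> int ` UNIV" by (rule image_eqI) simp
      then show ?thesis by blast
    next
      case False
      then have "z = ?neg (nat (- z - 1))" by simp
      then show ?thesis by blast
    qed
    then show ?thesis by blast
  qed
  show ?thesis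
    unfolding U by (rule summable_on_Un_disjoint[OF A B]) auto
qed

lemma summable_on_int_abs_shift:
  fixes F :: "nat \<Rightarrow> real"
  assumes "\<And>n. 0 \<le> F n" "summable F"
  shows "(\<lambda>m::int. F (nat \<bar>m + c\<bar>)) summable_on UNIV"
proof -
  have "bij_betw (\<lambda>m. m + c) UNIV (UNIV::int set)"
    by (rule bij_betwI[where g = "\<lambda>m. m - c"]) auto
  then show ?thesis
    using summable_on_int_abs[OF assms] summable_on_reindex_bij_betw[of "\<lambda>m. m + c" UNIV UNIV "\<lambda>z. F (nat \<bar>z\<bar>)"]
    by simp
qed

lemma summable_power_mult_small_bound: "summable (\<lambda>n. R ^ n * besselJ_small_bound X n)"
proof -
  have "summable (\<lambda>n. exp (X^2 / 4) * ((R * X / 2) ^ n / fact n))"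
    by (rule summable_mult[OF sums_summable[OF sums_pow_div_fact]])
  moreover have "exp (X^2 / 4) * ((R * X / 2) ^ n / fact n) = R ^ n * besselJ_small_bound X n" for n
  proof -
    have "(R * X / 2) ^ n = R ^ n * (X / 2) ^ n" by (simp add: power_mult_distrib[symmetric])
    then show ?thesis unfolding besselJ_small_bound_def by simp
  qed
  ultimately show ?thesis by simp
qed

lemma summable_on_power_mult_small_bound:
  assumes "1 \<le> R" "0 \<le> X"
  shows "(\<lambda>m::int. R ^ nat \<bar>m\<bar> * besselJ_small_bound X (nat \<bar>m + c\<bar>)) summable_on UNIV"
proof -
  let ?F = "\<lambda>n. R ^ n * besselJ_small_bound X n"
  have "(\<lambda>m::int. ?F (nat \<bar>m + c\<bar>)) summable_on UNIV"
    using assms summable_power_mult_small_bound besselJ_small_bound_nonneg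
    by (intro summable_on_int_abs_shift) auto
  then have "(\<lambda>m::int. R ^ nat \<bar>c\<bar> * ?F (nat \<bar>m + c\<bar>)) summable_on UNIV"
    by (rule summable_on_cmult_right)
  then show ?thesis
  proof (rule summable_on_comparison_test)
    fix m :: int
    have "nat \<bar>m\<bar> \<le> nat \<bar>c\<bar> + nat \<bar>m + c\<bar>" by (simp add: nat_le_iff abs_triangle_ineq4)
    then have "R ^ nat \<bar>m\<bar> \<le> R ^ (nat \<bar>c\<bar> + nat \<bar>m + c\<bar>)" using assms by (intro power_increasing) auto
    then have "R ^ nat \<bar>m\<bar> * besselJ_small_bound X (nat \<bar>m + c\<bar>)
        \<le> R ^ (nat \<bar>c\<bar> + nat \<bar>m + c\<bar>) * besselJ_small_bound X (nat \<bar>m + c\<bar>)"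
      using assms besselJ_small_bound_nonneg by (intro mult_right_mono) auto
    then show "R ^ nat \<bar>m\<bar> * besselJ_small_bound X (nat \<bar>m + c\<bar>) \<le> R ^ nat \<bar>c\<bar> * ?F (nat \<bar>m + c\<bar>)"
      by (simp add: power_add algebra_simps)
    show "0 \<le> R ^ nat \<bar>m\<bar> * besselJ_small_bound X (nat \<bar>m + c\<bar>)"
      using assms besselJ_small_bound_nonneg by simp
  qed
qed

section \<open>Domination of the integrand\<close>

lemma of_real_powr_eq_exp_ln: "0 < t \<Longrightarrow> complex_of_real t powr z = exp (z * complex_of_real (ln t))"
  by (simp add: powr_def Ln_of_real)

lemma set_borel_measurable_mult_Jintegrand:
  "set_borel_measurable (PiM {1..d} (\<lambda>_. lborel)) {y. \<forall>l\<in>{1..d}. 0 < y l} (\<lambda>y. c * Jintegrand d \<nu> mm x m y)"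
proof -
  let ?S = "{y. \<forall>l\<in>{1..d}. 0 < y l}"
  let ?g = "\<lambda>y. jfun (mm (d + 1) + m) (x * (\<Prod>l\<in>{1..d}. y l)) *
     (\<Prod>l\<in>{1..d}. exp ((2 * \<nu> l - 1) * complex_of_real (ln (y l))) * jfun (mm l + m) (x / y l))"
  have "(\<lambda>y. indicator ?S y *\<^sub>R (c * Jintegrand d \<nu> mm x m y)) = (\<lambda>y. indicator ?S y *\<^sub>R (c * ?g y))"
  proof
    fix y
    show "indicator ?S y *\<^sub>R (c * Jintegrand d \<nu> mm x m y) = indicator ?S y *\<^sub>R (c * ?g y)"
      by (cases "y \<in> ?S") (auto simp: Jintegrand_def of_real_powr_eq_exp_ln intro!: prod.cong)
  qed
  then show ?thesis unfolding set_borel_measurable_def by simp measurable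
qed

lemma norm_of_real_powr: "0 < y \<Longrightarrow> norm (complex_of_real y powr z) = y powr Re z"
  by (subst norm_powr_real_powr) auto

lemma norm_Jintegrand:
  assumes "\<forall>l\<in>{1..d}. 0 < y l"
  shows "norm (Jintegrand d \<nu> mm x m y) =
    2 * pi * \<bar>besselJ (mm (d + 1) + m) (4 * pi * x * (\<Prod>l\<in>{1..d}. y l))\<bar> *
    (\<Prod>l\<in>{1..d}. y l powr (2 * Re (\<nu> l) - 1) * (2 * pi * \<bar>besselJ (mm l + m) (4 * pi * x / y l)\<bar>))"
proof -
  have "norm (Jintegrand d \<nu> mm x m y) = norm (jfun (mm (d + 1) + m) (x * (\<Prod>l\<in>{1..d}. y l))) *
     (\<Prod>l\<in>{1..d}. norm (complex_of_real (y l) powr (2 * \<nu> l - 1) * jfun (mm l + m) (x / y l)))"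
    unfolding Jintegrand_def by (simp add: norm_mult prod_norm[symmetric])
  also have "\<dots> = 2 * pi * \<bar>besselJ (mm (d + 1) + m) (4 * pi * x * (\<Prod>l\<in>{1..d}. y l))\<bar> *
    (\<Prod>l\<in>{1..d}. y l powr (2 * Re (\<nu> l) - 1) * (2 * pi * \<bar>besselJ (mm l + m) (4 * pi * x / y l)\<bar>))"
  proof (intro arg_cong2[where f = "(*)"] prod.cong refl)
    show "norm (jfun (mm (d + 1) + m) (x * (\<Prod>l\<in>{1..d}. y l))) =
      2 * pi * \<bar>besselJ (mm (d + 1) + m) (4 * pi * x * (\<Prod>l\<in>{1..d}. y l))\<bar>"
      by (simp add: norm_jfun mult.assoc)
    fix l assume "l \<in> {1..d}"
    then show "norm (complex_of_real (y l) powr (2 * \<nu> l - 1) * jfun (mm l + m) (x / y l)) =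
      y l powr (2 * Re (\<nu> l) - 1) * (2 * pi * \<bar>besselJ (mm l + m) (4 * pi * x / y l)\<bar>)"
      using assms by (simp add: norm_mult norm_of_real_powr norm_jfun)
  qed
  finally show ?thesis .
qed

text \<open>The index r = 0 stands for the region y_1 ... y_d <= 1 and r in {1..d} for the region
  y_r >= 1; on it the Bessel factor with argument at most X gets the small-argument bound.\<close>

definition dominant_factor :: "real \<Rightarrow> real \<Rightarrow> nat \<Rightarrow> nat \<Rightarrow> real \<Rightarrow> real" where
  "dominant_factor X e r l t =
     indicator {0<..} t * (t powr (e - 1) * (if l = r then indicator {1..} t else min 1 (sqrt (t / X))))"

definition dominant_coeff :: "real \<Rightarrow> real \<Rightarrow> nat \<Rightarrow> (nat \<Rightarrow> int) \<Rightarrow> nat \<Rightarrow> int \<Rightarrow> real" where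
  "dominant_coeff X a d mm r m =
     2 * pi * (if r = 0 then besselJ_small_bound X (nat \<bar>mm (d + 1) + m\<bar>)
               else besselJ_bound (nat \<bar>mm (d + 1) + m\<bar>) * X powr a) *
     (\<Prod>l\<in>{1..d}. 2 * pi * (if l = r then besselJ_small_bound X (nat \<bar>mm l + m\<bar>)
                              else besselJ_bound (nat \<bar>mm l + m\<bar>)))"

lemma dominant_factor_nonneg: "0 \<le> X \<Longrightarrow> 0 \<le> dominant_factor X e r l t"
  unfolding dominant_factor_def indicator_def by (auto intro!: mult_nonneg_nonneg)

lemma dominant_coeff_nonneg: "0 \<le> X \<Longrightarrow> 0 \<le> dominant_coeff X a d mm r m"
  unfolding dominant_coeff_def using besselJ_bound_nonneg besselJ_small_bound_nonneg
  by (intro mult_nonneg_nonneg prod_nonneg) auto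

definition Jmajorant :: "real \<Rightarrow> real \<Rightarrow> (nat \<Rightarrow> real) \<Rightarrow> nat \<Rightarrow> (nat \<Rightarrow> int) \<Rightarrow> int \<Rightarrow> (nat \<Rightarrow> real) \<Rightarrow> real" where
  "Jmajorant X a e d mm m y =
     (\<Sum>r\<in>{0..d}. dominant_coeff X a d mm r m * (\<Prod>l\<in>{1..d}. dominant_factor X (e l) r l (y l)))"

lemma Jmajorant_nonneg: "0 \<le> X \<Longrightarrow> 0 \<le> Jmajorant X a e d mm m y"
  unfolding Jmajorant_def using dominant_coeff_nonneg dominant_factor_nonneg
  by (intro sum_nonneg mult_nonneg_nonneg prod_nonneg) auto

lemma mult_prod_le_prod_mult:
  fixes f p c q :: "'a \<Rightarrow> real"
  assumes "B \<le> C * (\<Prod>l\<in>L. p l)" "0 \<le> B" "0 \<le> C"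
    and "\<And>l. l \<in> L \<Longrightarrow> 0 \<le> f l" "\<And>l. l \<in> L \<Longrightarrow> 0 \<le> p l"
    and "\<And>l. l \<in> L \<Longrightarrow> f l * p l \<le> c l * q l"
  shows "B * (\<Prod>l\<in>L. f l) \<le> C * (\<Prod>l\<in>L. c l) * (\<Prod>l\<in>L. q l)"
proof -
  have "B * (\<Prod>l\<in>L. f l) \<le> (C * (\<Prod>l\<in>L. p l)) * (\<Prod>l\<in>L. f l)"
    using assms by (intro mult_right_mono prod_nonneg) auto
  also have "\<dots> = C * (\<Prod>l\<in>L. f l * p l)" by (simp add: prod.distrib algebra_simps)
  also have "\<dots> \<le> C * (\<Prod>l\<in>L. c l * q l)"
    using assms by (intro mult_left_mono prod_mono) auto
  also have "\<dots> = C * (\<Prod>l\<in>L. c l) * (\<Prod>l\<in>L. q l)" by (simp add: prod.distrib)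
  finally show ?thesis .
qed

lemma factor_le_dominant_factor:
  assumes "0 < X" "0 < y" "l = r \<Longrightarrow> 1 \<le> y"
  shows "y powr (2 * s - 1) * (2 * pi * \<bar>besselJ k (X / y)\<bar>) * y powr a
     \<le> 2 * pi * (if l = r then besselJ_small_bound X (nat \<bar>k\<bar>) else besselJ_bound (nat \<bar>k\<bar>)) *
       dominant_factor X (2 * s + a) r l y"
proof -
  have "y powr (2 * s - 1) * y powr a = y powr (2 * s + a - 1)"
    by (simp add: powr_add[symmetric] algebra_simps)
  then have e: "y powr (2 * s - 1) * (2 * pi * \<bar>besselJ k (X / y)\<bar>) * y powr a
      = 2 * pi * (y powr (2 * s + a - 1) * \<bar>besselJ k (X / y)\<bar>)"
    by (simp add: algebra_simps)
  show ?thesis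
  proof (cases "l = r")
    case True
    then have "1 \<le> y" using assms by simp
    then have J: "\<bar>besselJ k (X / y)\<bar> \<le> besselJ_small_bound X (nat \<bar>k\<bar>)"
      using assms by (intro abs_besselJ_le_small_bound) (auto simp: field_simps)
    have "dominant_factor X (2 * s + a) r l y = y powr (2 * s + a - 1)"
      unfolding dominant_factor_def using True assms \<open>1 \<le> y\<close> by simp
    then show ?thesis unfolding e using True mult_right_mono[OF J, of "y powr (2 * s + a - 1)"]
      by (simp add: algebra_simps)
  next
    case False
    have "y powr (2 * s + a - 1) * \<bar>besselJ k (X / y)\<bar>
        \<le> y powr (2 * s + a - 1) * (besselJ_bound (nat \<bar>k\<bar>) * min 1 (sqrt (y / X)))"
      using abs_besselJ_div_le[OF assms(2,1)] by (intro mult_left_mono) auto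
    moreover have "dominant_factor X (2 * s + a) r l y = y powr (2 * s + a - 1) * min 1 (sqrt (y / X))"
      unfolding dominant_factor_def using False assms by simp
    ultimately show ?thesis unfolding e using False by (simp add: algebra_simps)
  qed
qed

lemma abs_besselJ_mult_le:
  fixes r :: nat
  assumes X: "0 < X" and a: "-1/2 \<le> a" "a \<le> 0" and Y: "0 < Y" "r = 0 \<Longrightarrow> Y \<le> 1"
  shows "\<bar>besselJ k (X * Y)\<bar> \<le>
    (if r = 0 then besselJ_small_bound X (nat \<bar>k\<bar>) else besselJ_bound (nat \<bar>k\<bar>) * X powr a) * Y powr a"
proof (cases "r = 0")
  case True
  then have "\<bar>besselJ k (X * Y)\<bar> \<le> besselJ_small_bound X (nat \<bar>k\<bar>) * 1"
    using X Y by (auto intro!: abs_besselJ_le_small_bound simp: mult_left_le)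
  also have "\<dots> \<le> besselJ_small_bound X (nat \<bar>k\<bar>) * Y powr a"
    using X Y True a by (intro mult_left_mono one_le_powr_nonpos besselJ_small_bound_nonneg) auto
  finally show ?thesis using True by simp
next
  case False
  have "\<bar>besselJ k (X * Y)\<bar> \<le> besselJ_bound (nat \<bar>k\<bar>) * (X * Y) powr a"
    using X Y a by (intro abs_besselJ_le_powr) auto
  then show ?thesis using False X Y by (simp add: powr_mult mult.assoc)
qed

lemma Jintegrand_bound_le_dominant_term:
  fixes s :: "nat \<Rightarrow> real"
  assumes X: "0 < X" and a: "-1/2 \<le> a" "a \<le> 0" and y: "\<forall>l\<in>{1..d}. 0 < y l"
    and r: "r \<in> {0..d}" "if r = 0 then (\<Prod>l\<in>{1..d}. y l) \<le> 1 else 1 \<le> y r"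
  shows "2 * pi * \<bar>besselJ (mm (d + 1) + m) (X * (\<Prod>l\<in>{1..d}. y l))\<bar> *
      (\<Prod>l\<in>{1..d}. y l powr (2 * s l - 1) * (2 * pi * \<bar>besselJ (mm l + m) (X / y l)\<bar>))
    \<le> dominant_coeff X a d mm r m * (\<Prod>l\<in>{1..d}. dominant_factor X (2 * s l + a) r l (y l))"
proof -
  let ?Y = "\<Prod>l\<in>{1..d}. y l"
  let ?c = "2 * pi * (if r = 0 then besselJ_small_bound X (nat \<bar>mm (d + 1) + m\<bar>)
                      else besselJ_bound (nat \<bar>mm (d + 1) + m\<bar>) * X powr a)"
  have Y: "0 < ?Y" using y by (intro prod_pos) auto
  have "r = 0 \<Longrightarrow> ?Y \<le> 1" using r(2) by simp
  from abs_besselJ_mult_le[OF X a Y this, where k = "mm (d + 1) + m"]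
  have "2 * pi * \<bar>besselJ (mm (d + 1) + m) (X * ?Y)\<bar> \<le> ?c * (\<Prod>l\<in>{1..d}. y l powr a)"
    by (simp add: prod_powr_distrib mult.assoc)
  then have "2 * pi * \<bar>besselJ (mm (d + 1) + m) (X * ?Y)\<bar> *
      (\<Prod>l\<in>{1..d}. y l powr (2 * s l - 1) * (2 * pi * \<bar>besselJ (mm l + m) (X / y l)\<bar>))
    \<le> ?c * (\<Prod>l\<in>{1..d}. 2 * pi * (if l = r then besselJ_small_bound X (nat \<bar>mm l + m\<bar>)
                                    else besselJ_bound (nat \<bar>mm l + m\<bar>))) *
      (\<Prod>l\<in>{1..d}. dominant_factor X (2 * s l + a) r l (y l))"
  proof (rule mult_prod_le_prod_mult)
    fix l assume l: "l \<in> {1..d}"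
    show "y l powr (2 * s l - 1) * (2 * pi * \<bar>besselJ (mm l + m) (X / y l)\<bar>) * y l powr a
        \<le> 2 * pi * (if l = r then besselJ_small_bound X (nat \<bar>mm l + m\<bar>) else besselJ_bound (nat \<bar>mm l + m\<bar>)) *
          dominant_factor X (2 * s l + a) r l (y l)"
      using l y r by (intro factor_le_dominant_factor X) auto
  qed (use X besselJ_bound_nonneg besselJ_small_bound_nonneg in auto)
  then show ?thesis unfolding dominant_coeff_def .
qed

lemma norm_Jintegrand_le_Jmajorant:
  assumes x: "0 < x" and a: "-1/2 \<le> a" "a \<le> 0" and y: "\<forall>l\<in>{1..d}. 0 < y l"
  shows "norm (Jintegrand d \<nu> mm x m y) \<le> Jmajorant (4 * pi * x) a (\<lambda>l. 2 * Re (\<nu> l) + a) d mm m y"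
proof -
  let ?T = "\<lambda>r. dominant_coeff (4 * pi * x) a d mm r m *
                (\<Prod>l\<in>{1..d}. dominant_factor (4 * pi * x) (2 * Re (\<nu> l) + a) r l (y l))"
  obtain r where r: "r \<in> {0..d}" "if r = 0 then (\<Prod>l\<in>{1..d}. y l) \<le> 1 else 1 \<le> y r"
  proof (cases "(\<Prod>l\<in>{1..d}. y l) \<le> 1")
    case True
    then show ?thesis using that[of 0] by simp
  next
    case False
    have "\<not> (\<forall>l\<in>{1..d}. y l < 1)"
    proof
      assume "\<forall>l\<in>{1..d}. y l < 1"
      then have "(\<Prod>l\<in>{1..d}. y l) \<le> 1" using y by (intro prod_le_1) (auto simp: less_imp_le)
      with False show False by simp
    qed
    then obtain l where "l \<in> {1..d}" "1 \<le> y l" by auto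
    then show ?thesis using that[of l] by auto
  qed
  have "norm (Jintegrand d \<nu> mm x m y) \<le> ?T r"
    unfolding norm_Jintegrand[OF y]
    using Jintegrand_bound_le_dominant_term[of "4 * pi * x" a d y r mm m "\<lambda>l. Re (\<nu> l)"] x a y r
    by (simp add: mult.assoc)
  also have "\<dots> \<le> (\<Sum>r\<in>{0..d}. ?T r)"
    using r(1) x dominant_coeff_nonneg dominant_factor_nonneg
    by (intro member_le_sum mult_nonneg_nonneg prod_nonneg) auto
  finally show ?thesis unfolding Jmajorant_def .
qed

lemma integrable_lborel_indicator:
  fixes f :: "real \<Rightarrow> real"
  assumes "f absolutely_integrable_on A" "A \<in> sets borel" "f \<in> borel_measurable borel"
  shows "integrable lborel (\<lambda>t. indicator A t * f t)"
proof -
  have "integrable lebesgue (\<lambda>t. indicator A t *\<^sub>R f t)"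
    using assms(1) by (simp add: set_integrable_def)
  moreover have m: "(\<lambda>t. indicator A t *\<^sub>R f t) \<in> borel_measurable lborel"
    using assms(2,3) by measurable
  ultimately show ?thesis using integrable_completion[OF m] by simp
qed

lemma integrable_powr_at_0:
  fixes p :: real
  assumes "-1 < p"
  shows "integrable lborel (\<lambda>t. indicator {0<..1} t * t powr p)"
proof -
  have "(\<lambda>t. t powr p) integrable_on {0<..1::real}"
    by (rule integrable_on_powr_from_0') (use assms in auto)
  then have "(\<lambda>t. t powr p) absolutely_integrable_on {0<..1::real}"
    by (rule nonnegative_absolutely_integrable_1) simp
  then show ?thesis by (rule integrable_lborel_indicator) auto
qed

lemma integrable_powr_at_top:
  fixes p :: real
  assumes "p < -1"
  shows "integrable lborel (\<lambda>t. indicator {1..} t * t powr p)"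
proof -
  have "(\<lambda>t. t powr p) integrable_on {1::real..}"
    using has_integral_powr_to_inf[of p 1] assms unfolding integrable_on_def by auto
  then have "(\<lambda>t. t powr p) absolutely_integrable_on {1::real..}"
    by (rule nonnegative_absolutely_integrable_1) simp
  then show ?thesis by (rule integrable_lborel_indicator) auto
qed

lemma borel_measurable_dominant_factor [measurable]: "dominant_factor X e r l \<in> borel_measurable borel"
  unfolding dominant_factor_def by measurable

lemma dominant_factor_le:
  assumes "0 < X"
  shows "dominant_factor X e r l t
    \<le> X powr (- (1/2)) * (indicator {0<..1} t * t powr (e - 1/2)) + indicator {1..} t * t powr (e - 1)"
    (is "_ \<le> ?g t")
proof (cases "0 < t")
  case t: True
  have sq: "sqrt (t / X) = t powr (1/2) * X powr (- (1/2))"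
  proof -
    have e1: "X powr (- (1/2)) = inverse (X powr (1/2))" by (rule powr_minus)
    have e2: "X powr (1/2) = sqrt X" using assms by (intro powr_half_sqrt) simp
    have e3: "t powr (1/2) = sqrt t" using t by (intro powr_half_sqrt) simp
    show ?thesis unfolding e1 e2 e3 real_sqrt_divide by (simp add: divide_inverse)
  qed
  show ?thesis
  proof (cases "l = r")
    case True
    then show ?thesis using t by (simp add: dominant_factor_def indicator_def)
  next
    case False
    then have "dominant_factor X e r l t = t powr (e - 1) * min 1 (sqrt (t / X))"
      using t by (simp add: dominant_factor_def)
    moreover have "t powr (e - 1) * min 1 (sqrt (t / X)) \<le> t powr (e - 1) * sqrt (t / X)"
      by (intro mult_left_mono) auto
    moreover have "t powr (e - 1) * sqrt (t / X) = X powr (- (1/2)) * t powr (e - 1/2)"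
      unfolding sq by (simp add: powr_add[symmetric] algebra_simps)
    moreover have "t powr (e - 1) * min 1 (sqrt (t / X)) \<le> t powr (e - 1)"
      using t assms by (intro mult_right_le_one_le) auto
    moreover have "X powr (- (1/2)) * t powr (e - 1/2) \<le> ?g t" if "t \<le> 1"
      using t that by (simp add: indicator_def)
    moreover have "t powr (e - 1) \<le> ?g t" if "\<not> t \<le> 1"
      using that by (simp add: indicator_def)
    ultimately show ?thesis by (cases "t \<le> 1") linarith+
  qed
qed (simp add: dominant_factor_def)

lemma integrable_dominant_factor:
  assumes "0 < X" "-1/2 < e" "e < 0"
  shows "integrable lborel (dominant_factor X e r l)"
proof (cases "l = r")
  case True
  then have "dominant_factor X e r l = (\<lambda>t. indicator {1..} t * t powr (e - 1))"
    unfolding dominant_factor_def by (auto simp: indicator_def fun_eq_iff)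
  then show ?thesis using integrable_powr_at_top[of "e - 1"] assms by simp
next
  case False
  let ?g = "\<lambda>t. X powr (- (1/2)) * (indicator {0<..1} t * t powr (e - 1/2)) + indicator {1..} t * t powr (e - 1)"
  have "integrable lborel ?g"
    using integrable_powr_at_0[of "e - 1/2"] integrable_powr_at_top[of "e - 1"] assms
    by (intro Bochner_Integration.integrable_add integrable_mult_right) auto
  then show ?thesis
  proof (rule Bochner_Integration.integrable_bound)
    show "dominant_factor X e r l \<in> borel_measurable lborel" by measurable
    have "norm (dominant_factor X e r l t) \<le> norm (?g t)" for t
    proof -
      have "0 \<le> ?g t" by (simp add: indicator_def)
      then show ?thesis
        using dominant_factor_le[OF assms(1), of e r l t] dominant_factor_nonneg[of X e r l t] assms(1)
        by simp
    qed
    then show "AE t in lborel. norm (dominant_factor X e r l t) \<le> norm (?g t)" by simp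
  qed
qed

section \<open>Summation over m\<close>

lemma prod_if_le_power:
  fixes s b W :: "'a \<Rightarrow> real"
  assumes "finite L" "\<And>l. l \<in> L \<Longrightarrow> 0 \<le> b l \<and> b l \<le> W l * q" "\<And>l. l \<in> L \<Longrightarrow> 1 \<le> W l * q"
    and "\<And>l. 0 \<le> s l"
  shows "(\<Prod>l\<in>L. if l = r then s l else b l) \<le> (\<Prod>l\<in>L. W l) * q ^ card L * (if r \<in> L then s r else 1)"
proof -
  have "(\<Prod>l\<in>L. if l = r then s l else b l) \<le> (\<Prod>l\<in>L. (W l * q) * (if l = r then s l else 1))"
  proof (rule prod_mono)
    fix l assume l: "l \<in> L"
    show "0 \<le> (if l = r then s l else b l) \<and> (if l = r then s l else b l) \<le> W l * q * (if l = r then s l else 1)"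
      using assms(2,3,4)[of l] l mult_right_mono[of 1 "W l * q" "s l"] by auto
  qed
  also have "\<dots> = (\<Prod>l\<in>L. W l) * q ^ card L * (if r \<in> L then s r else 1)"
    using assms(1) by (simp add: prod.distrib prod.delta)
  finally show ?thesis .
qed

lemma prod_dominant_coeff_factors_le:
  assumes "0 \<le> X" "r \<in> {0..d}"
  shows "(\<Prod>l\<in>{1..d}. if l = r then besselJ_small_bound X (nat \<bar>mm l + m\<bar>) else besselJ_bound (nat \<bar>mm l + m\<bar>))
    \<le> (\<Prod>l\<in>{1..d}. besselJ_bound (nat \<bar>mm l\<bar>)) * (exp 3 ^ nat \<bar>m\<bar>) ^ d *
       (if r = 0 then 1 else besselJ_small_bound X (nat \<bar>m + mm r\<bar>))"
proof -
  define q where "q = exp (3::real) ^ nat \<bar>m\<bar>"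
  have q: "1 \<le> q" unfolding q_def by (rule one_le_power) simp
  have Wq: "1 \<le> besselJ_bound (nat \<bar>mm l\<bar>) * q" for l
    using mult_mono[OF one_le_besselJ_bound q] besselJ_bound_nonneg by simp
  have bound: "besselJ_bound (nat \<bar>mm l + m\<bar>) \<le> besselJ_bound (nat \<bar>mm l\<bar>) * q" for l
    unfolding q_def by (rule besselJ_bound_add_le)
  have "(\<Prod>l\<in>{1..d}. if l = r then besselJ_small_bound X (nat \<bar>mm l + m\<bar>) else besselJ_bound (nat \<bar>mm l + m\<bar>))
    \<le> (\<Prod>l\<in>{1..d}. besselJ_bound (nat \<bar>mm l\<bar>)) * q ^ card {1..d} *
       (if r \<in> {1..d} then besselJ_small_bound X (nat \<bar>mm r + m\<bar>) else 1)"
    by (rule prod_if_le_power) (use Wq bound besselJ_bound_nonneg besselJ_small_bound_nonneg assms in auto)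
  then show ?thesis using assms(2) by (cases "r = 0") (auto simp: q_def add.commute)
qed

lemma dominant_coeff_le:
  assumes X: "0 < X" and r: "r \<in> {0..d}"
  shows "\<exists>C c. \<forall>m. dominant_coeff X a d mm r m \<le> C * (exp 3 ^ (d + 1)) ^ nat \<bar>m\<bar> * besselJ_small_bound X (nat \<bar>m + c\<bar>)"
proof -
  let ?W = "\<lambda>l. besselJ_bound (nat \<bar>mm l\<bar>)"
  let ?C = "(2 * pi) ^ Suc d * (if r = 0 then 1 else X powr a * ?W (d + 1)) * (\<Prod>l\<in>{1..d}. ?W l)"
  let ?c = "if r = 0 then mm (d + 1) else mm r"
  have "dominant_coeff X a d mm r m \<le> ?C * (exp 3 ^ (d + 1)) ^ nat \<bar>m\<bar> * besselJ_small_bound X (nat \<bar>m + ?c\<bar>)" for m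
  proof -
    define q where "q = exp (3::real) ^ nat \<bar>m\<bar>"
    define s where "s = besselJ_small_bound X (nat \<bar>m + ?c\<bar>)"
    define P where "P = (\<Prod>l\<in>{1..d}. if l = r then besselJ_small_bound X (nat \<bar>mm l + m\<bar>) else besselJ_bound (nat \<bar>mm l + m\<bar>))"
    have q: "1 \<le> q" unfolding q_def by (rule one_le_power) simp
    have s: "0 \<le> s" unfolding s_def using X by (simp add: besselJ_small_bound_nonneg)
    have W: "0 \<le> (\<Prod>l\<in>{1..d}. ?W l)" by (simp add: besselJ_bound_nonneg prod_nonneg)
    have P: "P \<le> (\<Prod>l\<in>{1..d}. ?W l) * q ^ d * (if r = 0 then 1 else s)"
      using prod_dominant_coeff_factors_le[of X r d mm m, folded P_def] X r unfolding q_def s_def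
      by (cases "r = 0") simp_all
    have "0 \<le> P" unfolding P_def using X besselJ_bound_nonneg besselJ_small_bound_nonneg
      by (intro prod_nonneg) simp
    have lead: "(if r = 0 then besselJ_small_bound X (nat \<bar>mm (d + 1) + m\<bar>) else besselJ_bound (nat \<bar>mm (d + 1) + m\<bar>) * X powr a) * P
        \<le> (if r = 0 then 1 else X powr a * ?W (d + 1)) * (\<Prod>l\<in>{1..d}. ?W l) * q ^ (d + 1) * s"
    proof (cases "r = 0")
      case True
      have "q ^ d \<le> q ^ (d + 1)" using q by (intro power_increasing) auto
      then have "P \<le> (\<Prod>l\<in>{1..d}. ?W l) * q ^ (d + 1)"
        using P True W by (auto intro: order_trans mult_left_mono)
      then have "s * P \<le> s * ((\<Prod>l\<in>{1..d}. ?W l) * q ^ (d + 1))"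
        using s by (rule mult_left_mono)
      then show ?thesis using True by (simp add: s_def add.commute mult_ac)
    next
      case False
      have P': "P \<le> (\<Prod>l\<in>{1..d}. ?W l) * q ^ d * s" using P False by simp
      have B: "besselJ_bound (nat \<bar>mm (d + 1) + m\<bar>) * X powr a \<le> ?W (d + 1) * q * X powr a"
        unfolding q_def by (rule mult_right_mono[OF besselJ_bound_add_le]) simp
      have "besselJ_bound (nat \<bar>mm (d + 1) + m\<bar>) * X powr a * P
          \<le> (?W (d + 1) * q * X powr a) * ((\<Prod>l\<in>{1..d}. ?W l) * q ^ d * s)"
        by (rule mult_mono[OF B P']) (use q besselJ_bound_nonneg \<open>0 \<le> P\<close> in simp_all)
      then show ?thesis using False by (simp add: algebra_simps)
    qed
    have "dominant_coeff X a d mm r m = (2 * pi) ^ Suc d *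
        ((if r = 0 then besselJ_small_bound X (nat \<bar>mm (d + 1) + m\<bar>)
          else besselJ_bound (nat \<bar>mm (d + 1) + m\<bar>) * X powr a) * P)"
      unfolding dominant_coeff_def P_def by (simp add: prod.distrib)
    also have "\<dots> \<le> (2 * pi) ^ Suc d *
        ((if r = 0 then 1 else X powr a * ?W (d + 1)) * (\<Prod>l\<in>{1..d}. ?W l) * q ^ (d + 1) * s)"
      using lead by (rule mult_left_mono) simp
    also have "q ^ (d + 1) = (exp 3 ^ (d + 1)) ^ nat \<bar>m\<bar>"
      unfolding q_def by (simp only: power_mult[symmetric] mult.commute)
    finally show ?thesis unfolding s_def by (simp only: mult_ac)
  qed
  then show ?thesis by blast
qed

lemma summable_on_dominant_coeff:
  assumes "0 < X" "r \<in> {0..d}"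
  shows "(\<lambda>m. dominant_coeff X a d mm r m) summable_on UNIV"
proof -
  obtain C c where le: "\<And>m. dominant_coeff X a d mm r m \<le> C * (exp 3 ^ (d + 1)) ^ nat \<bar>m\<bar> * besselJ_small_bound X (nat \<bar>m + c\<bar>)"
    using dominant_coeff_le[OF assms] by blast
  have "(\<lambda>m::int. (exp 3 ^ (d + 1)) ^ nat \<bar>m\<bar> * besselJ_small_bound X (nat \<bar>m + c\<bar>)) summable_on UNIV"
    using assms by (intro summable_on_power_mult_small_bound one_le_power) auto
  then have "(\<lambda>m::int. C * ((exp 3 ^ (d + 1)) ^ nat \<bar>m\<bar> * besselJ_small_bound X (nat \<bar>m + c\<bar>))) summable_on UNIV"
    by (rule summable_on_cmult_right)
  then show ?thesis
  proof (rule summable_on_comparison_test)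
    show "dominant_coeff X a d mm r m \<le> C * ((exp 3 ^ (d + 1)) ^ nat \<bar>m\<bar> * besselJ_small_bound X (nat \<bar>m + c\<bar>))" for m
      using le[of m] by (simp add: mult.assoc)
    show "0 \<le> dominant_coeff X a d mm r m" for m
      using assms dominant_coeff_nonneg by simp
  qed
qed

lemma
  assumes "0 < X" "\<forall>l\<in>{1..d}. -1/2 < e l \<and> e l < 0"
  shows integrable_Jmajorant: "integrable (PiM {1..d} (\<lambda>_. lborel)) (Jmajorant X a e d mm m)"
    and integral_Jmajorant: "integral\<^sup>L (PiM {1..d} (\<lambda>_. lborel)) (Jmajorant X a e d mm m) =
      (\<Sum>r\<in>{0..d}. dominant_coeff X a d mm r m * (\<Prod>l\<in>{1..d}. integral\<^sup>L lborel (dominant_factor X (e l) r l)))"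
proof -
  interpret product_sigma_finite "\<lambda>_::nat. lborel :: real measure" by standard
  have int: "integrable lborel (dominant_factor X (e l) r l)" if "l \<in> {1..d}" for r l
    using assms that by (intro integrable_dominant_factor) auto
  have prod: "integrable (PiM {1..d} (\<lambda>_. lborel)) (\<lambda>y. \<Prod>l\<in>{1..d}. dominant_factor X (e l) r l (y l))" for r
    by (rule product_integrable_prod) (auto intro: int)
  show "integrable (PiM {1..d} (\<lambda>_. lborel)) (Jmajorant X a e d mm m)"
    unfolding Jmajorant_def[abs_def] using prod by (intro Bochner_Integration.integrable_sum integrable_mult_right)
  show "integral\<^sup>L (PiM {1..d} (\<lambda>_. lborel)) (Jmajorant X a e d mm m) =
      (\<Sum>r\<in>{0..d}. dominant_coeff X a d mm r m * (\<Prod>l\<in>{1..d}. integral\<^sup>L lborel (dominant_factor X (e l) r l)))"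
  proof -
    have "integral\<^sup>L (PiM {1..d} (\<lambda>_. lborel)) (\<lambda>y. \<Prod>l\<in>{1..d}. dominant_factor X (e l) r l (y l))
        = (\<Prod>l\<in>{1..d}. integral\<^sup>L lborel (dominant_factor X (e l) r l))" for r
      by (rule product_integral_prod) (auto intro: int)
    then show ?thesis
      unfolding Jmajorant_def[abs_def] using prod by (simp add: Bochner_Integration.integral_sum)
  qed
qed

lemma summable_on_integral_Jmajorant:
  assumes "0 < X" "\<forall>l\<in>{1..d}. -1/2 < e l \<and> e l < 0"
  shows "(\<lambda>m. integral\<^sup>L (PiM {1..d} (\<lambda>_. lborel)) (Jmajorant X a e d mm m)) summable_on UNIV"
  unfolding integral_Jmajorant[OF assms]
  using assms summable_on_dominant_coeff
  by (intro summable_on_sum summable_on_cmult_left) auto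

lemma summable_norm_set_integral_if_majorant:
  fixes f :: "int \<Rightarrow> 'a \<Rightarrow> 'b::{banach, second_countable_topology}"
  assumes "\<And>m. set_borel_measurable M S (f m)" "\<And>m. integrable M (g m)"
    and "\<And>m y. y \<in> S \<Longrightarrow> norm (f m y) \<le> g m y" "\<And>m y. 0 \<le> g m y"
    and "(\<lambda>m. integral\<^sup>L M (g m)) summable_on UNIV"
  shows "(\<forall>m. set_integrable M S (f m)) \<and> (\<lambda>m. LINT y:S|M. norm (f m y)) summable_on UNIV"
proof -
  have bound: "norm (indicator S y *\<^sub>R f m y) \<le> g m y" for m y
    using assms(3,4) by (cases "y \<in> S") auto
  have int: "set_integrable M S (f m)" for m
    unfolding set_integrable_def
    by (rule Bochner_Integration.integrable_bound[OF assms(2)])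
       (use assms(1) bound assms(4) in \<open>auto simp: set_borel_measurable_def\<close>)
  have "(LINT y:S|M. norm (f m y)) \<le> integral\<^sup>L M (g m)" for m
  proof -
    have "(\<lambda>y. norm (indicator S y *\<^sub>R f m y)) = (\<lambda>y. indicator S y *\<^sub>R norm (f m y))"
      by (auto simp: indicator_def fun_eq_iff)
    moreover have "integrable M (\<lambda>y. norm (indicator S y *\<^sub>R f m y))"
      using int[of m] unfolding set_integrable_def by (rule integrable_norm)
    ultimately show ?thesis
      unfolding set_lebesgue_integral_def using bound assms(2) by (intro integral_mono) auto
  qed
  moreover have "0 \<le> (LINT y:S|M. norm (f m y))" for m
    unfolding set_lebesgue_integral_def by (intro Bochner_Integration.integral_nonneg) auto
  ultimately have "(\<lambda>m. LINT y:S|M. norm (f m y)) summable_on UNIV"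
    by (intro summable_on_comparison_test[OF assms(5)]) auto
  with int show ?thesis by blast
qed

theorem proposition6p11:
  fixes n d :: nat and \<nu> :: "nat \<Rightarrow> complex" and mm :: "nat \<Rightarrow> int"
    and x :: real and u :: complex
  assumes "n \<ge> 2" and "d = n - 1"
    and "\<exists>a\<in>{-1/2..0::real}. \<forall>l\<in>{1..d}. -1/4 - a/2 < Re (\<nu> l) \<and> Re (\<nu> l) < - a/2"
    and "x > 0" and "norm u = 1"
  shows "(\<forall>m::int. set_integrable (PiM {1..d} (\<lambda>_. lborel)) {y. \<forall>l\<in>{1..d}. 0 < y l}
                 (\<lambda>y. u powi m * Jintegrand d \<nu> mm x m y))
       \<and> (\<lambda>m::int. LINT y:{y. \<forall>l\<in>{1..d}. 0 < y l}|PiM {1..d} (\<lambda>_. lborel).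
                 norm (u powi m * Jintegrand d \<nu> mm x m y)) summable_on UNIV"
proof -
  \<comment> \<open>n enters only through d = n - 1; the argument works for every d.\<close>
  obtain a where a: "-1/2 \<le> a" "a \<le> 0" and \<nu>: "\<forall>l\<in>{1..d}. -1/4 - a/2 < Re (\<nu> l) \<and> Re (\<nu> l) < - a/2"
    using assms(3) by auto
  define e where "e l = 2 * Re (\<nu> l) + a" for l
  have X: "0 < 4 * pi * x" using assms(4) by simp
  have e: "\<forall>l\<in>{1..d}. -1/2 < e l \<and> e l < 0" using \<nu> by (force simp: e_def)
  show ?thesis
  proof (rule summable_norm_set_integral_if_majorant)
    show "set_borel_measurable (PiM {1..d} (\<lambda>_. lborel)) {y. \<forall>l\<in>{1..d}. 0 < y l} (\<lambda>y. u powi m * Jintegrand d \<nu> mm x m y)" for m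
      by (rule set_borel_measurable_mult_Jintegrand)
    show "norm (u powi m * Jintegrand d \<nu> mm x m y) \<le> Jmajorant (4 * pi * x) a e d mm m y"
      if "y \<in> {y. \<forall>l\<in>{1..d}. 0 < y l}" for m y
      using norm_Jintegrand_le_Jmajorant[OF assms(4) a, of d y \<nu> mm m] that assms(5)
      by (simp add: norm_mult norm_power_int e_def[abs_def])
  qed (use X e integrable_Jmajorant summable_on_integral_Jmajorant Jmajorant_nonneg in auto)
qed

end
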